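(* Let $n\ge 2$ and let $p=(p_1,\dots,p_n)$ be a vector with all $p_i>0$. For $q\in \mathrm{Sim}_n(1)$ define $$OD(q,p)=\sum_{1\le i\le n}\Big((1-q_i)\log(1-q_i) - q_i\log\frac{q_i}{p_i}\Big).$$ (1) For an index $j$, $\max_{q\in\mathrm{Sim}_n(1)} OD(q,p)=\log(p_j)$ if and only if $p_j\ge\sum_{i\ne j}p_i$ (such $j$ is called dominant). If $n\ge 3$ there is at most one dominant index. If there is no dominant index, the maximum of $OD(\cdot,p)$ over $\mathrm{Sim}_n(1)$ is attained in the interior of the simplex. (2) If $p_i=c>0$ for all $i$, then $$\max_{q\in\mathrm{Sim}_n(1)} OD(q,p)=OD\!\left(\tfrac{e}{n},p\right)=(n-1)\log(1-n^{-1})+\log n+\log c.$$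
   Context: $\mathrm{Sim}_n(1)=\{(q_1,\dots,q_n): q_i\ge 0,\ \sum_i q_i=1\}$; $e=(1,\dots,1)$, so $e/n$ is the uniform vector. Conventions: $0\log 0=0$ (i.e. $0^0=1$). *)

theory Defs
  imports Complex_Main
begin

text \<open>Vectors in R^n are modelled as functions nat => real; only indices i < n matter.
  Note: ln 0 = 0 in Isabelle, so x * ln x = 0 at x = 0, matching the convention 0 log 0 = 0.\<close>

definition Sim :: "nat \<Rightarrow> (nat \<Rightarrow> real) set" where
  "Sim n = {q. (\<forall>i<n. q i \<ge> 0) \<and> (\<Sum>i<n. q i) = 1}"

definition OD :: "nat \<Rightarrow> (nat \<Rightarrow> real) \<Rightarrow> (nat \<Rightarrow> real) \<Rightarrow> real" where
  "OD n q p = (\<Sum>i<n. (1 - q i) * ln (1 - q i) - q i * ln (q i / p i))"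

definition dominant :: "nat \<Rightarrow> (nat \<Rightarrow> real) \<Rightarrow> nat \<Rightarrow> bool" where
  "dominant n p j \<longleftrightarrow> j < n \<and> p j \<ge> (\<Sum>i\<in>{..<n} - {j}. p i)"

end

(*
  Superadditivity of x \<mapsto> (1 - x) ln (1 - x) together with the log-sum inequality bounds OD(q, p)
  by q_j ln p_j + (1 - q_j) ln S_j, where S_j is the sum of the other weights. If p_j \<ge> S_j this is
  at most ln p_j, attained at the vertex e_j. If S_j > p_j, shifting mass e from e_j to the other
  coordinates in proportion to p gains e (ln S_j - ln p_j) - e^2 > 0 for small e.

  A maximiser exists by compactness. It has no zero coordinate, because moving mass e onto such a
  coordinate gains -e ln e, which dominates every other first-order change; and without a dominant
  index it is no vertex.

  For constant weights c, OD(q, p) = \<Sum> h(q_i) + ln c with h(t) = (1 - t) ln (1 - t) - t ln t, which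
  is concave on [0, 1/2]. At most one q_i exceeds 1/2; lowering it to 1/2 and spreading the rest
  evenly does not decrease the sum, and then Jensen's inequality gives the bound n h(1/n).
*)

theory Submission
  imports Defs "HOL-Analysis.Analysis" "HOL-Real_Asymp.Real_Asymp"
begin

lemma xlnx_continuous_on: "continuous_on {0..1} (\<lambda>x::real. x * ln x)"
proof (rule continuous_on_IccI)
  show "((\<lambda>x::real. x * ln x) \<longlongrightarrow> 0 * ln 0) (at_right 0)"
    by simp real_asymp
  show "((\<lambda>x::real. x * ln x) \<longlongrightarrow> 1 * ln 1) (at_left 1)"
    by (intro tendsto_intros) auto
  show "((\<lambda>x::real. x * ln x) \<longlongrightarrow> x * ln x) (at x)" if "0 < x" for x
    using that by (intro tendsto_intros) auto
qed simp

lemma continuous_on_xlnx_compose: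
  fixes f :: "'a::topological_space \<Rightarrow> real"
  assumes "continuous_on S f" "f ` S \<subseteq> {0..1}"
  shows "continuous_on S (\<lambda>x. f x * ln (f x))"
  by (rule continuous_on_compose2[OF xlnx_continuous_on assms])

lemma xlnx_ge_tangent:
  fixes a y :: real
  assumes a: "0 < a" and y: "0 \<le> y"
  shows "a * ln a + (ln a + 1) * (y - a) \<le> y * ln y"
proof (cases "y = 0")
  case True
  thus ?thesis using a by (simp add: algebra_simps)
next
  case False
  hence yp: "0 < y" using y by simp
  have "ln (a / y) \<le> a / y - 1" using a yp by (intro ln_le_minus_one) simp
  hence "y * (ln a - ln y) \<le> y * (a / y - 1)" using a yp by (intro mult_left_mono) (auto simp: ln_div)
  thus ?thesis using yp by (simp add: algebra_simps)
qed

lemma xlnx_ge_minus_one: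
  fixes y :: real
  assumes "0 \<le> y"
  shows "y - 1 \<le> y * ln y"
  using xlnx_ge_tangent[of 1 y] assms by simp

lemma one_minus_xlnx_superadd:
  fixes a b :: real
  assumes a: "0 \<le> a" and b: "0 \<le> b" and ab: "a + b \<le> 1"
  shows "(1 - a) * ln (1 - a) + (1 - b) * ln (1 - b) \<le> (1 - (a + b)) * ln (1 - (a + b))"
proof -
  define g where "g = (\<lambda>x::real. (1 - (a + x)) * ln (1 - (a + x)) - (1 - x) * ln (1 - x))"
  have "g 0 \<le> g b"
  proof (rule DERIV_nonneg_imp_increasing_open[OF b])
    fix x assume x: "0 < x" "x < b"
    have "0 < 1 - (a + x)" "0 < 1 - x" using x a ab by auto
    hence "DERIV g x :> ln (1 - x) - ln (1 - (a + x))"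
      unfolding g_def by (auto intro!: derivative_eq_intros simp: divide_simps)
    moreover have "ln (1 - (a + x)) \<le> ln (1 - x)" using x a ab by simp
    ultimately show "\<exists>y. DERIV g x :> y \<and> 0 \<le> y" by auto
  next
    show "continuous_on {0..b} g"
      unfolding g_def using a ab
      by (intro continuous_on_diff continuous_on_xlnx_compose continuous_intros) auto
  qed
  thus ?thesis unfolding g_def by simp
qed

lemma sum_one_minus_xlnx_le:
  fixes q :: "'a \<Rightarrow> real"
  assumes "finite F" "\<forall>i\<in>F. 0 \<le> q i" "(\<Sum>i\<in>F. q i) \<le> 1"
  shows "(\<Sum>i\<in>F. (1 - q i) * ln (1 - q i)) \<le> (1 - (\<Sum>i\<in>F. q i)) * ln (1 - (\<Sum>i\<in>F. q i))"
  using assms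
proof (induction F rule: finite_induct)
  case (insert a F)
  have "(\<Sum>i\<in>F. q i) \<ge> 0" using insert.prems by (intro sum_nonneg) auto
  moreover have "(\<Sum>i\<in>F. (1 - q i) * ln (1 - q i)) \<le> (1 - (\<Sum>i\<in>F. q i)) * ln (1 - (\<Sum>i\<in>F. q i))"
    using insert by (auto intro!: insert.IH)
  ultimately show ?case
    using insert one_minus_xlnx_superadd[of "q a" "\<Sum>i\<in>F. q i"] by simp
qed simp

lemma log_sum_inequality:
  fixes q p :: "'a \<Rightarrow> real"
  assumes fin: "finite A" and q: "\<forall>i\<in>A. 0 \<le> q i" and p: "\<forall>i\<in>A. 0 < p i" and "A \<noteq> {}"
  shows "(\<Sum>i\<in>A. q i) * ln ((\<Sum>i\<in>A. q i) / (\<Sum>i\<in>A. p i)) \<le> (\<Sum>i\<in>A. q i * ln (q i / p i))"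
proof -
  define Q where "Q = (\<Sum>i\<in>A. q i)"
  define P where "P = (\<Sum>i\<in>A. p i)"
  have P: "0 < P" unfolding P_def using assms by (intro sum_pos) auto
  have Q: "0 \<le> Q" unfolding Q_def using q by (intro sum_nonneg) auto
  have "q i * ln (Q / P) + q i - p i * Q / P \<le> q i * ln (q i / p i)" if i: "i \<in> A" for i
  proof (cases "q i = 0")
    case True
    moreover have "0 \<le> p i * Q / P" using p i P Q by (simp add: less_imp_le)
    ultimately show ?thesis by simp
  next
    case False
    hence qi: "0 < q i" using q i by force
    have pi: "0 < p i" using p i by auto
    have "q i \<le> Q" unfolding Q_def using fin q i by (intro member_le_sum) auto
    hence Q: "0 < Q" using qi by simp
    have "ln ((p i * Q) / (q i * P)) \<le> (p i * Q) / (q i * P) - 1"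
      using qi pi Q P by (intro ln_le_minus_one) simp
    hence "ln (p i) + ln Q - ln (q i) - ln P \<le> (p i * Q) / (q i * P) - 1"
      using qi pi Q P by (simp add: ln_div ln_mult)
    hence "q i * (ln (p i) + ln Q - ln (q i) - ln P) \<le> q i * ((p i * Q) / (q i * P) - 1)"
      using qi by (intro mult_left_mono) auto
    hence "q i * (ln (p i) + ln Q - ln (q i) - ln P) \<le> p i * Q / P - q i"
      using qi by (simp add: field_simps)
    thus ?thesis using qi pi Q P by (simp add: ln_div algebra_simps)
  qed
  hence "(\<Sum>i\<in>A. q i * ln (Q / P) + q i - p i * Q / P) \<le> (\<Sum>i\<in>A. q i * ln (q i / p i))"
    by (intro sum_mono)
  also have "(\<Sum>i\<in>A. q i * ln (Q / P) + q i - p i * Q / P) = Q * ln (Q / P) + Q - P * Q / P"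
    unfolding Q_def P_def by (simp add: sum.distrib sum_subtractf sum_distrib_right sum_divide_distrib)
  also have "\<dots> = Q * ln (Q / P)" using P by simp
  finally show ?thesis unfolding Q_def P_def .
qed

lemma Sim_nonneg: "q \<in> Sim n \<Longrightarrow> i < n \<Longrightarrow> 0 \<le> q i"
  unfolding Sim_def by auto

lemma Sim_le_one:
  assumes "q \<in> Sim n" "i < n"
  shows "q i \<le> 1"
proof -
  have "q i \<le> (\<Sum>k<n. q k)"
    using assms unfolding Sim_def by (intro member_le_sum) auto
  thus ?thesis using assms unfolding Sim_def by simp
qed

lemma sum_lessThan_remove:
  fixes f :: "nat \<Rightarrow> 'a::comm_monoid_add"
  shows "j < n \<Longrightarrow> (\<Sum>i<n. f i) = f j + (\<Sum>i\<in>{..<n} - {j}. f i)"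
  by (simp add: sum.remove)

lemma sum_others_pos:
  fixes p :: "nat \<Rightarrow> real"
  assumes "2 \<le> n" "\<forall>i<n. 0 < p i" "j < n"
  shows "0 < (\<Sum>i\<in>{..<n} - {j}. p i)"
proof -
  have "(if j = 0 then 1 else 0) \<in> {..<n} - {j}" using assms by auto
  thus ?thesis using assms by (intro sum_pos) auto
qed

definition OD_term :: "real \<Rightarrow> real \<Rightarrow> real" where
  "OD_term w t = (1 - t) * ln (1 - t) - t * ln (t / w)"

lemma OD_eq_sum_OD_term: "OD n q p = (\<Sum>i<n. OD_term (p i) (q i))"
  unfolding OD_def OD_term_def ..

lemma OD_term_eq:
  assumes "0 < w" "0 \<le> t"
  shows "OD_term w t = OD_term 1 t + t * ln w"
  using assms unfolding OD_term_def by (cases "t = 0") (auto simp: ln_div algebra_simps)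

lemma OD_term_continuous_on:
  assumes "0 < w"
  shows "continuous_on {0..1} (OD_term w)"
proof (rule continuous_on_eq)
  show "continuous_on {0..1} (\<lambda>t. (1 - t) * ln (1 - t) - t * ln t + t * ln w)"
    by (intro continuous_on_add continuous_on_diff continuous_on_xlnx_compose continuous_intros) auto
  show "(1 - t) * ln (1 - t) - t * ln t + t * ln w = OD_term w t" if "t \<in> {0..1}" for t
    using OD_term_eq[OF assms, of t] that by (simp add: OD_term_def)
qed

lemma OD_le_vertex_bound:
  assumes n2: "2 \<le> n" and ppos: "\<forall>i<n. 0 < p i" and q: "q \<in> Sim n" and j: "j < n"
  shows "OD n q p \<le> q j * ln (p j) + (1 - q j) * ln (\<Sum>i\<in>{..<n} - {j}. p i)"
proof -
  define A where "A = {..<n} - {j}"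
  define S where "S = (\<Sum>i\<in>A. p i)"
  define x where "x = q j"
  have S: "0 < S" unfolding S_def A_def using sum_others_pos[OF n2 ppos j] .
  have x: "0 \<le> x" "x \<le> 1" unfolding x_def using Sim_nonneg Sim_le_one q j by auto
  have fA: "finite A" unfolding A_def by simp
  have qA: "\<forall>i\<in>A. 0 \<le> q i" unfolding A_def using Sim_nonneg[OF q] by auto
  have pA: "\<forall>i\<in>A. 0 < p i" unfolding A_def using ppos by auto
  have sumA: "(\<Sum>i\<in>A. q i) = 1 - x"
    using q sum_lessThan_remove[OF j, of q] unfolding Sim_def A_def x_def by simp
  have "OD n q p = OD_term (p j) x + (\<Sum>i\<in>A. (1 - q i) * ln (1 - q i)) - (\<Sum>i\<in>A. q i * ln (q i / p i))"
    unfolding OD_eq_sum_OD_term A_def x_def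
    by (simp add: sum_lessThan_remove[OF j] OD_term_def sum_subtractf)
  also have "\<dots> \<le> OD_term (p j) x + x * ln x - (1 - x) * ln ((1 - x) / S)"
  proof -
    have "(\<Sum>i\<in>A. (1 - q i) * ln (1 - q i)) \<le> x * ln x"
      using sum_one_minus_xlnx_le[OF fA qA] sumA x by simp
    moreover have "(1 - x) * ln ((1 - x) / S) \<le> (\<Sum>i\<in>A. q i * ln (q i / p i))"
      using log_sum_inequality[OF fA qA pA] sumA S unfolding S_def by fastforce
    ultimately show ?thesis by linarith
  qed
  also have "\<dots> = x * ln (p j) + (1 - x) * ln (1 - x) - (1 - x) * ln ((1 - x) / S)"
    using OD_term_eq[of "p j" x] ppos j x by (simp add: OD_term_def)
  also have "\<dots> = x * ln (p j) + (1 - x) * ln S"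
    using x S by (cases "x = 1") (auto simp: ln_div algebra_simps)
  finally show ?thesis unfolding x_def S_def A_def .
qed

definition vertex :: "nat \<Rightarrow> nat \<Rightarrow> real" where
  "vertex j = (\<lambda>i. if i = j then 1 else 0)"

lemma vertex_in_Sim: "j < n \<Longrightarrow> vertex j \<in> Sim n"
  unfolding Sim_def vertex_def by (auto simp: sum.delta)

lemma OD_vertex:
  assumes "j < n" "0 < p j"
  shows "OD n (vertex j) p = ln (p j)"
proof -
  have "OD n (vertex j) p = (\<Sum>i<n. if i = j then ln (p j) else 0)"
    unfolding OD_eq_sum_OD_term vertex_def OD_term_def using assms
    by (intro sum.cong) (auto simp: ln_div)
  thus ?thesis using assms by simp
qed

lemma OD_toward_weights_ge:
  assumes n2: "2 \<le> n" and ppos: "\<forall>i<n. 0 < p i" and j: "j < n" and e: "0 < e" "e \<le> 1/2"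
  defines "S \<equiv> \<Sum>i\<in>{..<n} - {j}. p i"
  defines "q \<equiv> \<lambda>i. if i = j then 1 - e else e * p i / S"
  shows "q \<in> Sim n" and "ln (p j) + e * (ln S - ln (p j)) - e\<^sup>2 \<le> OD n q p"
proof -
  define A where "A = {..<n} - {j}"
  have pj: "0 < p j" using ppos j by simp
  have S: "0 < S" unfolding S_def using sum_others_pos[OF n2 ppos j] .
  have qA: "q i = e * p i / S" if "i \<in> A" for i using that unfolding q_def A_def by simp
  have sumA: "(\<Sum>i\<in>A. q i) = e"
    using S by (simp add: qA S_def A_def sum_divide_distrib[symmetric] sum_distrib_left[symmetric])
  show qS: "q \<in> Sim n"
    using e ppos S sum_lessThan_remove[OF j, of q] sumA unfolding Sim_def A_def by (auto simp: q_def)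
  have term_A: "- q i * (1 + ln e - ln S) \<le> OD_term (p i) (q i)" if i: "i \<in> A" for i
  proof -
    have "i < n" "0 < p i" using i ppos unfolding A_def by auto
    hence "q i * ln (q i / p i) = q i * (ln e - ln S)" using e S by (simp add: qA[OF i] ln_div)
    moreover have "- q i \<le> (1 - q i) * ln (1 - q i)"
      using xlnx_ge_minus_one[of "1 - q i"] Sim_le_one[OF qS \<open>i < n\<close>] by simp
    ultimately show ?thesis unfolding OD_term_def by (simp add: algebra_simps)
  qed
  have "- e * (1 + ln e - ln S) = (\<Sum>i\<in>A. - q i * (1 + ln e - ln S))"
    by (simp add: sum_distrib_right[symmetric] sum_negf sumA)
  also have "\<dots> \<le> (\<Sum>i\<in>A. OD_term (p i) (q i))" by (intro sum_mono term_A)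
  finally have sum_A: "- e * (1 + ln e - ln S) \<le> (\<Sum>i\<in>A. OD_term (p i) (q i))" .
  have term_j: "OD_term (p j) (q j) = e * ln e - (1 - e) * ln (1 - e) + (1 - e) * ln (p j)"
    using e pj unfolding q_def OD_term_def by (simp add: ln_div algebra_simps)
  have "(1 - e) * ln (1 - e) \<le> (1 - e) * (- e)"
    using e ln_le_minus_one[of "1 - e"] by (intro mult_left_mono) auto
  thus "ln (p j) + e * (ln S - ln (p j)) - e\<^sup>2 \<le> OD n q p"
    using sum_A term_j unfolding OD_eq_sum_OD_term sum_lessThan_remove[OF j] A_def
    by (simp add: algebra_simps power2_eq_square)
qed

lemma OD_exceeds_vertex:
  assumes n2: "2 \<le> n" and ppos: "\<forall>i<n. 0 < p i" and j: "j < n"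
    and nondom: "p j < (\<Sum>i\<in>{..<n} - {j}. p i)"
  shows "\<exists>q\<in>Sim n. ln (p j) < OD n q p"
proof -
  define L where "L = ln (\<Sum>i\<in>{..<n} - {j}. p i) - ln (p j)"
  have "0 < p j" using ppos j by simp
  hence L: "0 < L" using nondom unfolding L_def by (simp add: ln_less_cancel_iff)
  define e where "e = min (1/2) (L/2)"
  have e: "0 < e" "e \<le> 1/2" "e \<le> L/2" unfolding e_def using L by auto
  hence "ln (p j) < ln (p j) + e * L - e\<^sup>2" by (simp add: power2_eq_square algebra_simps)
  thus ?thesis using OD_toward_weights_ge[OF n2 ppos j e(1,2)] unfolding L_def by force
qed

lemma sum_fun_upd_two:
  fixes f :: "'a \<Rightarrow> 'b \<Rightarrow> 'c::ab_group_add"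
  assumes "finite A" "k \<in> A" "m \<in> A" "k \<noteq> m"
  shows "(\<Sum>i\<in>A. f i ((q(k := a, m := b)) i))
           = (\<Sum>i\<in>A. f i (q i)) + (f k a - f k (q k)) + (f m b - f m (q m))"
proof -
  have "(\<Sum>i\<in>A. f i ((q(k := a, m := b)) i)) - (\<Sum>i\<in>A. f i (q i))
          = (\<Sum>i\<in>A. f i ((q(k := a, m := b)) i) - f i (q i))"
    by (simp add: sum_subtractf)
  also have "\<dots> = (\<Sum>i\<in>{k, m}. f i ((q(k := a, m := b)) i) - f i (q i))"
    by (rule sum.mono_neutral_right) (use assms in auto)
  also have "\<dots> = (f k a - f k (q k)) + (f m b - f m (q m))"
    using assms by simp
  finally show ?thesis by (simp add: algebra_simps)
qed

lemma Sim_vertex_or_fractional: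
  assumes "q \<in> Sim n"
  shows "(\<exists>j<n. q j = 1) \<or> (\<exists>m<n. 0 < q m \<and> q m < 1)"
proof (rule ccontr)
  assume "\<not> ?thesis"
  hence "\<forall>i<n. q i = 0" using Sim_nonneg[OF assms] Sim_le_one[OF assms] by force
  thus False using assms unfolding Sim_def by simp
qed

lemma OD_term_gain_from_zero:
  assumes "0 < w" "0 < e" "e \<le> 1"
  shows "- e - e * ln e + e * ln w \<le> OD_term w e - OD_term w 0"
  using xlnx_ge_minus_one[of "1 - e"] assms by (simp add: OD_term_def ln_div algebra_simps)

lemma OD_term_loss_from_decrease:
  assumes w: "0 < w" and t: "0 < t" "t < 1" and e: "0 < e" "e \<le> t / 2"
  shows "e * (ln (1 - t) + ln (t / 2) + 2 - ln w) \<le> OD_term w (t - e) - OD_term w t"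
proof -
  have pos: "0 < t - e" using e t by simp
  have "(1 - t) * ln (1 - t) + (ln (1 - t) + 1) * e \<le> (1 - (t - e)) * ln (1 - (t - e))"
    using xlnx_ge_tangent[of "1 - t" "1 - (t - e)"] t e by (simp add: algebra_simps)
  moreover have "(t - e) * ln (t - e) + (ln (t - e) + 1) * e \<le> t * ln t"
    using xlnx_ge_tangent[of "t - e" t] pos t by (simp add: algebra_simps)
  moreover have "(ln (t / 2) + 1) * e \<le> (ln (t - e) + 1) * e"
    using e t by (intro mult_right_mono) auto
  ultimately show ?thesis using pos t w by (simp add: OD_term_def ln_div algebra_simps)
qed

text \<open>Moving mass \<open>e\<close> onto an empty coordinate gains \<open>- e * ln e\<close>, which beats every
  other change of order \<open>e\<close>.\<close>

lemma OD_improve_zero_coordinate: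
  assumes ppos: "\<forall>i<n. 0 < p i" and q: "q \<in> Sim n" and k: "k < n" "q k = 0"
    and m: "m < n" "0 < q m" "q m < 1"
  shows "\<exists>q'\<in>Sim n. OD n q p < OD n q' p"
proof -
  have km: "k \<noteq> m" using k m by auto
  have pk: "0 < p k" and pm: "0 < p m" using ppos k m by auto
  define C where "C = ln (p k) + ln (1 - q m) + ln (q m / 2) + 1 - ln (p m)"
  define e where "e = min (q m / 2) (exp C / 2)"
  have e: "0 < e" "e \<le> q m / 2" "e \<le> exp C / 2" unfolding e_def using m by auto
  have "ln e \<le> C - ln 2" using ln_mono[OF e(3) e(1)] by (simp add: ln_div)
  moreover have "0 < ln (2::real)" by simp
  ultimately have lne: "ln e < C" by linarith
  define q' where "q' = q(k := e, m := q m - e)"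
  have upd: "(\<Sum>i<n. f i (q' i)) = (\<Sum>i<n. f i (q i)) + (f k e - f k 0) + (f m (q m - e) - f m (q m))"
    for f :: "nat \<Rightarrow> real \<Rightarrow> real"
    unfolding q'_def using sum_fun_upd_two[of "{..<n}" k m f q e "q m - e"] k m km by simp
  have q': "q' \<in> Sim n"
    using upd[of "\<lambda>_ t. t"] q e Sim_nonneg[OF q] unfolding Sim_def q'_def by auto
  have "OD n q p + e * (C - ln e) \<le> OD n q' p"
    using upd[of "\<lambda>i. OD_term (p i)"] OD_term_gain_from_zero[OF pk e(1)]
      OD_term_loss_from_decrease[OF pm m(2,3) e(1,2)] e m
    unfolding OD_eq_sum_OD_term C_def by (simp add: algebra_simps)
  moreover have "0 < e * (C - ln e)" using e lne by simp
  ultimately show ?thesis using q' by force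
qed

text \<open>In the product topology on \<open>nat \<Rightarrow> real\<close> the set \<open>Sim n\<close> is not compact, since
  the coordinates from \<open>n\<close> on are unconstrained; its slice vanishing there is.\<close>

definition Sim_slice :: "nat \<Rightarrow> (nat \<Rightarrow> real) set" where
  "Sim_slice n = (\<Pi>\<^sub>E i\<in>UNIV. if i < n then {0..1} else {0}) \<inter> {q. (\<Sum>i<n. q i) = 1}"

lemma compact_Sim_slice: "compact (Sim_slice n)"
  unfolding Sim_slice_def
proof (rule compact_Int_closed)
  have "compactin (product_topology (\<lambda>i. euclidean) UNIV)
          (\<Pi>\<^sub>E i\<in>UNIV. if i < n then {0..1::real} else {0})"
    by (subst compactin_PiE) auto
  thus "compact (\<Pi>\<^sub>E i\<in>UNIV. if i < n then {0..1::real} else {0})"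
    by (simp add: euclidean_product_topology)
  show "closed {q::nat \<Rightarrow> real. (\<Sum>i<n. q i) = 1}"
    by (intro closed_Collect_eq continuous_on_sum continuous_on_product_coordinates continuous_on_const)
qed

lemma Sim_slice_subset: "Sim_slice n \<subseteq> Sim n"
proof
  fix q assume "q \<in> Sim_slice n"
  hence q: "\<forall>i. q i \<in> (if i < n then {0..1} else {0})" "(\<Sum>i<n. q i) = 1"
    unfolding Sim_slice_def by (auto simp: PiE_iff)
  have "0 \<le> q i" if "i < n" for i using q(1)[rule_format, of i] that by simp
  thus "q \<in> Sim n" using q(2) unfolding Sim_def by simp
qed

lemma restrict_in_Sim_slice:
  assumes q: "q \<in> Sim n"
  shows "(\<lambda>i. if i < n then q i else 0) \<in> Sim_slice n"
proof -
  have "(if i < n then q i else 0) \<in> (if i < n then {0..1} else {0})" for i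
    using Sim_nonneg[OF q] Sim_le_one[OF q] by auto
  moreover have "(\<Sum>i<n. if i < n then q i else 0) = 1" using q unfolding Sim_def by simp
  ultimately show ?thesis unfolding Sim_slice_def by (simp add: PiE_iff)
qed

lemma OD_continuous_on_Sim_slice:
  assumes ppos: "\<forall>i<n. 0 < p i"
  shows "continuous_on (Sim_slice n) (\<lambda>q. OD n q p)"
  unfolding OD_eq_sum_OD_term
proof (intro continuous_on_sum)
  fix i assume i: "i \<in> {..<n}"
  have sub: "(\<lambda>q. q i) ` Sim_slice n \<subseteq> {0..1}"
  proof
    fix x assume "x \<in> (\<lambda>q. q i) ` Sim_slice n"
    then obtain q where "q \<in> Sim n" "x = q i" using Sim_slice_subset by blast
    thus "x \<in> {0..1}" using Sim_nonneg Sim_le_one i by auto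
  qed
  have "continuous_on {0..1} (OD_term (p i))" using OD_term_continuous_on ppos i by simp
  from continuous_on_compose2[OF this continuous_on_subset[OF continuous_on_product_coordinates subset_UNIV] sub]
  show "continuous_on (Sim_slice n) (\<lambda>q. OD_term (p i) (q i))" .
qed

lemma OD_attains_max:
  assumes n: "0 < n" and ppos: "\<forall>i<n. 0 < p i"
  shows "\<exists>q\<in>Sim n. \<forall>q'\<in>Sim n. OD n q' p \<le> OD n q p"
proof -
  have "vertex 0 \<in> Sim_slice n"
    using n unfolding Sim_slice_def vertex_def by (auto simp: PiE_iff)
  then obtain q where q: "q \<in> Sim_slice n" "\<forall>q'\<in>Sim_slice n. OD n q' p \<le> OD n q p"
    using continuous_attains_sup[OF compact_Sim_slice _ OD_continuous_on_Sim_slice[OF ppos]]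
    by blast
  have "OD n q' p \<le> OD n q p" if "q' \<in> Sim n" for q'
  proof -
    have "OD n q' p = OD n (\<lambda>i. if i < n then q' i else 0) p"
      unfolding OD_def by (intro sum.cong) auto
    also have "\<dots> \<le> OD n q p" using q(2) restrict_in_Sim_slice[OF that] by blast
    finally show ?thesis .
  qed
  thus ?thesis using q Sim_slice_subset by blast
qed

lemma OD_max_in_interior:
  assumes n2: "2 \<le> n" and ppos: "\<forall>i<n. 0 < p i" and nondom: "\<not> (\<exists>j. dominant n p j)"
  shows "\<exists>q\<in>Sim n. (\<forall>i<n. 0 < q i) \<and> (\<forall>q'\<in>Sim n. OD n q' p \<le> OD n q p)"
proof -
  obtain q where q: "q \<in> Sim n" and max: "\<forall>q'\<in>Sim n. OD n q' p \<le> OD n q p"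
    using OD_attains_max[of n p] n2 ppos by auto
  have "0 < q k" if k: "k < n" for k
  proof (rule ccontr)
    assume "\<not> 0 < q k"
    hence "q k = 0" using Sim_nonneg[OF q k] by simp
    from Sim_vertex_or_fractional[OF q] show False
    proof (elim disjE exE conjE)
      fix j assume j: "j < n" "q j = 1"
      have "p j < (\<Sum>i\<in>{..<n} - {j}. p i)" using nondom j unfolding dominant_def by auto
      then obtain q' where "q' \<in> Sim n" "ln (p j) < OD n q' p"
        using OD_exceeds_vertex[OF n2 ppos j(1)] by blast
      moreover have "OD n q p \<le> ln (p j)" using OD_le_vertex_bound[OF n2 ppos q j(1)] j by simp
      ultimately show False using max by fastforce
    next
      fix m assume "m < n" "0 < q m" "q m < 1"
      then obtain q' where "q' \<in> Sim n" "OD n q p < OD n q' p"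
        using OD_improve_zero_coordinate[OF ppos q k \<open>q k = 0\<close>] by blast
      thus False using max by fastforce
    qed
  qed
  thus ?thesis using q max by blast
qed

lemma dominant_unique:
  fixes p :: "nat \<Rightarrow> real"
  assumes n3: "3 \<le> n" and ppos: "\<forall>i<n. 0 < p i" and "dominant n p a" "dominant n p b"
  shows "a = b"
proof (rule ccontr)
  assume ab: "a \<noteq> b"
  have a: "a < n" "(\<Sum>i\<in>{..<n} - {a}. p i) \<le> p a"
    and b: "b < n" "(\<Sum>i\<in>{..<n} - {b}. p i) \<le> p b"
    using assms unfolding dominant_def by auto
  define R where "R = (\<Sum>i\<in>{..<n} - {a} - {b}. p i)"
  have "\<exists>c::nat. c < 3 \<and> c \<noteq> a \<and> c \<noteq> b" by presburger
  then obtain c where "c < 3" "c \<noteq> a" "c \<noteq> b" by blast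
  hence "c \<in> {..<n} - {a} - {b}" using n3 by auto
  hence "0 < R" unfolding R_def using ppos by (intro sum_pos2) auto
  moreover have "(\<Sum>i\<in>{..<n} - {a}. p i) = p b + R"
    unfolding R_def using b ab by (subst sum.remove[of _ b]) auto
  moreover have "(\<Sum>i\<in>{..<n} - {b}. p i) = p a + R"
  proof -
    have "{..<n} - {b} - {a} = {..<n} - {a} - {b}" by blast
    thus ?thesis unfolding R_def using a ab by (subst sum.remove[of _ a]) auto
  qed
  ultimately show False using a b by linarith
qed

lemma SUP_OD_eq_max:
  assumes "q0 \<in> Sim n" "\<forall>q\<in>Sim n. OD n q p \<le> OD n q0 p"
  shows "(SUP q\<in>Sim n. OD n q p) = OD n q0 p"
  using assms by (intro cSup_eq_maximum) auto

lemma SUP_OD_eq_ln_iff: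
  assumes n2: "2 \<le> n" and ppos: "\<forall>i<n. 0 < p i" and j: "j < n"
  shows "(SUP q\<in>Sim n. OD n q p) = ln (p j) \<longleftrightarrow> (\<Sum>i\<in>{..<n} - {j}. p i) \<le> p j"
proof
  assume SUP: "(SUP q\<in>Sim n. OD n q p) = ln (p j)"
  obtain q0 where q0: "q0 \<in> Sim n" "\<forall>q\<in>Sim n. OD n q p \<le> OD n q0 p"
    using OD_attains_max[of n p] n2 ppos by auto
  show "(\<Sum>i\<in>{..<n} - {j}. p i) \<le> p j"
  proof (rule ccontr)
    assume "\<not> ?thesis"
    then obtain q where q: "q \<in> Sim n" "ln (p j) < OD n q p"
      using OD_exceeds_vertex[OF n2 ppos j] by force
    have "OD n q p \<le> OD n q0 p" using q0(2) q(1) by blast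
    thus False using q(2) SUP SUP_OD_eq_max[OF q0] by linarith
  qed
next
  assume dom: "(\<Sum>i\<in>{..<n} - {j}. p i) \<le> p j"
  have "OD n q p \<le> ln (p j)" if q: "q \<in> Sim n" for q
  proof -
    have "(1 - q j) * ln (\<Sum>i\<in>{..<n} - {j}. p i) \<le> (1 - q j) * ln (p j)"
      using dom sum_others_pos[OF n2 ppos j] Sim_le_one[OF q j] by (intro mult_left_mono) auto
    thus ?thesis using OD_le_vertex_bound[OF n2 ppos q j] by (simp add: algebra_simps)
  qed
  moreover have "OD n (vertex j) p = ln (p j)" using OD_vertex[OF j] ppos j by simp
  ultimately show "(SUP q\<in>Sim n. OD n q p) = ln (p j)"
    using SUP_OD_eq_max[OF vertex_in_Sim[OF j]] by simp
qed

lemma OD_term_one_has_derivative: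
  assumes "0 < t" "t < 1"
  shows "(OD_term 1 has_real_derivative - ln (t * (1 - t)) - 2) (at t)"
proof -
  have OD_term_one: "OD_term 1 = (\<lambda>t. (1 - t) * ln (1 - t) - t * ln t)"
    by (simp add: OD_term_def fun_eq_iff)
  have val: "- ln (t * (1 - t)) - 2 = - ln (1 - t) - 1 - (ln t + 1)"
    using assms by (simp add: ln_mult)
  show ?thesis
    unfolding OD_term_one val using assms by (auto intro!: derivative_eq_intros simp: divide_simps)
qed

lemma ln_mult_one_minus_mono:
  fixes a s :: real
  assumes "0 < s" "s \<le> a" "a + s \<le> 1"
  shows "ln (s * (1 - s)) \<le> ln (a * (1 - a))"
proof -
  have "a * (1 - a) - s * (1 - s) = (a - s) * (1 - a - s)" by (simp add: algebra_simps)
  also have "\<dots> \<ge> 0" using assms by (intro mult_nonneg_nonneg) auto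
  finally show ?thesis using assms by (intro ln_mono) auto
qed

lemma OD_term_one_le_tangent:
  assumes a: "0 < a" "a \<le> 1/2" and t: "0 \<le> t" "t \<le> 1/2"
  shows "OD_term 1 t \<le> OD_term 1 a + (- ln (a * (1 - a)) - 2) * (t - a)"
proof -
  define h where "h = (\<lambda>s. OD_term 1 a + (- ln (a * (1 - a)) - 2) * (s - a) - OD_term 1 s)"
  have h': "DERIV h s :> ln (s * (1 - s)) - ln (a * (1 - a))" if "0 < s" "s < 1" for s
    unfolding h_def using that
    by (auto intro!: derivative_eq_intros OD_term_one_has_derivative)
  have "continuous_on {0..1} h"
    unfolding h_def using OD_term_continuous_on[of 1] by (intro continuous_intros) auto
  hence cont: "continuous_on {x..y} h" if "0 \<le> x" "y \<le> 1" for x y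
    by (rule continuous_on_subset) (use that in auto)
  have "h a \<le> h t"
  proof (cases "t \<le> a")
    case True
    show ?thesis
    proof (rule DERIV_nonpos_imp_decreasing_open[OF True _ cont])
      fix s assume s: "t < s" "s < a"
      have "ln (s * (1 - s)) \<le> ln (a * (1 - a))"
        using s t a by (intro ln_mult_one_minus_mono) auto
      thus "\<exists>y. DERIV h s :> y \<and> y \<le> 0" using h'[of s] s t a by auto
    qed (use t a in auto)
  next
    case False
    show ?thesis
    proof (rule DERIV_nonneg_imp_increasing_open[of a t, OF _ _ cont])
      fix s assume s: "a < s" "s < t"
      have "ln (a * (1 - a)) \<le> ln (s * (1 - s))"
        using s t a by (intro ln_mult_one_minus_mono) auto
      thus "\<exists>y. DERIV h s :> y \<and> 0 \<le> y" using h'[of s] s t a by auto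
    qed (use t a False in auto)
  qed
  thus ?thesis unfolding h_def by simp
qed

lemma OD_term_one_jensen:
  fixes w t :: "'a \<Rightarrow> real"
  assumes fin: "finite A" and w: "\<forall>i\<in>A. 0 \<le> w i" and t: "\<forall>i\<in>A. 0 \<le> t i \<and> t i \<le> 1/2"
    and a: "0 \<le> a" "a \<le> 1/2" and mean: "(\<Sum>i\<in>A. w i * t i) = (\<Sum>i\<in>A. w i) * a"
  shows "(\<Sum>i\<in>A. w i * OD_term 1 (t i)) \<le> (\<Sum>i\<in>A. w i) * OD_term 1 a"
proof (cases "a = 0")
  case True
  hence "\<forall>i\<in>A. w i * t i = 0" using mean fin w t by (simp add: sum_nonneg_eq_0_iff)
  hence "\<forall>i\<in>A. w i * OD_term 1 (t i) = 0" by (auto simp: OD_term_def)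
  moreover have "OD_term 1 0 = 0" by (simp add: OD_term_def)
  ultimately show ?thesis using True by (simp add: sum.neutral)
next
  case False
  define D where "D = - ln (a * (1 - a)) - 2"
  have "(\<Sum>i\<in>A. w i * OD_term 1 (t i)) \<le> (\<Sum>i\<in>A. w i * (OD_term 1 a + D * (t i - a)))"
    using w t a False unfolding D_def
    by (intro sum_mono mult_left_mono OD_term_one_le_tangent) auto
  also have "\<dots> = (\<Sum>i\<in>A. w i) * OD_term 1 a + D * ((\<Sum>i\<in>A. w i * t i) - (\<Sum>i\<in>A. w i) * a)"
    by (simp add: algebra_simps sum.distrib sum_subtractf sum_distrib_left sum_distrib_right)
  finally show ?thesis using mean by simp
qed

lemma OD_term_one_split_decreasing:
  fixes N x :: real
  assumes N: "2 \<le> N" and x: "1/2 \<le> x" "x \<le> 1"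
  shows "OD_term 1 x + (N - 1) * OD_term 1 ((1 - x) / (N - 1))
           \<le> OD_term 1 (1/2) + (N - 1) * OD_term 1 (1 / (2 * (N - 1)))"
proof -
  define F where "F = (\<lambda>s. OD_term 1 s + (N - 1) * OD_term 1 ((1 - s) / (N - 1)))"
  have "F x \<le> F (1/2)"
  proof (rule DERIV_nonpos_imp_decreasing_open[OF x(1)])
    fix s assume s: "1/2 < s" "s < x"
    define y where "y = (1 - s) / (N - 1)"
    have "(1 - s) / (N - 1) \<le> (1 - s) / 1" using s x N by (intro divide_left_mono) auto
    hence y: "0 < y" "y \<le> 1 - s" "y < 1" using s x N unfolding y_def by auto
    have "DERIV (\<lambda>s. (1 - s) / (N - 1)) s :> (0 - 1) / (N - 1)"
      by (intro DERIV_cdivide DERIV_diff DERIV_const DERIV_ident)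
    from DERIV_chain2[OF OD_term_one_has_derivative[OF y(1) y(3), unfolded y_def] this]
    have "DERIV F s :> (- ln (s * (1 - s)) - 2) + (N - 1) * ((- ln (y * (1 - y)) - 2) * ((0 - 1) / (N - 1)))"
      unfolding F_def y_def using s x
      by (intro DERIV_add DERIV_cmult OD_term_one_has_derivative) auto
    moreover have "ln (y * (1 - y)) \<le> ln (s * (1 - s))"
      using y s by (intro ln_mult_one_minus_mono) auto
    ultimately show "\<exists>D. DERIV F s :> D \<and> D \<le> 0" using N by auto
  next
    have "continuous_on {1/2..x} (\<lambda>s. (1 - s) / (N - 1))" using N by (intro continuous_intros) auto
    moreover have "(\<lambda>s. (1 - s) / (N - 1)) ` {1/2..x} \<subseteq> {0..1}"
      using N x by (auto simp: field_simps)
    ultimately have "continuous_on {1/2..x} (\<lambda>s. OD_term 1 ((1 - s) / (N - 1)))"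
      by (rule continuous_on_compose2[OF OD_term_continuous_on[of 1], rotated]) auto
    moreover have "continuous_on {1/2..x} (OD_term 1)"
      by (rule continuous_on_subset[OF OD_term_continuous_on]) (use x in auto)
    ultimately show "continuous_on {1/2..x} F"
      unfolding F_def by (intro continuous_on_add continuous_on_mult continuous_on_const)
  qed
  thus ?thesis unfolding F_def by (simp add: field_simps)
qed

lemma OD_term_one_split_le:
  fixes N x :: real
  assumes N: "2 \<le> N" and x: "1/2 \<le> x" "x \<le> 1"
  shows "OD_term 1 x + (N - 1) * OD_term 1 ((1 - x) / (N - 1)) \<le> N * OD_term 1 (1 / N)"
proof -
  have "1 / (2 * (N - 1)) \<le> 1/2" using N by (simp add: field_simps)
  hence "OD_term 1 (1/2) + (N - 1) * OD_term 1 (1 / (2 * (N - 1))) \<le> N * OD_term 1 (1 / N)"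
    using OD_term_one_jensen[of UNIV "\<lambda>b. if b then 1 else N - 1"
        "\<lambda>b. if b then 1/2 else 1 / (2 * (N - 1))" "1 / N"] N
    by (simp add: UNIV_bool field_simps)
  thus ?thesis using OD_term_one_split_decreasing[OF N x] by linarith
qed

lemma sum_OD_term_one_le:
  assumes n2: "2 \<le> n" and q: "q \<in> Sim n"
  shows "(\<Sum>i<n. OD_term 1 (q i)) \<le> real n * OD_term 1 (1 / real n)"
proof -
  define N where "N = real n"
  have N: "2 \<le> N" unfolding N_def using n2 by simp
  have sum_q: "(\<Sum>i<n. q i) = 1" using q unfolding Sim_def by simp
  show ?thesis
  proof (cases "\<forall>i<n. q i \<le> 1/2")
    case True
    thus ?thesis
      using OD_term_one_jensen[of "{..<n}" "\<lambda>_. 1" q "1 / N"] Sim_nonneg[OF q] sum_q N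
      unfolding N_def by simp
  next
    case False
    then obtain j where j: "j < n" "1/2 < q j" by auto
    define x where "x = q j"
    define A where "A = {..<n} - {j}"
    have x: "1/2 < x" "x \<le> 1" unfolding x_def using j Sim_le_one[OF q] by auto
    have card_A: "real (card A) = N - 1" unfolding A_def N_def using j by (simp add: of_nat_diff)
    have sum_A: "(\<Sum>i\<in>A. q i) = 1 - x"
      using sum_q sum_lessThan_remove[OF j(1), of q] unfolding A_def x_def by simp
    have q_A: "0 \<le> q i \<and> q i \<le> 1/2" if "i \<in> A" for i
    proof -
      have "q i \<le> (\<Sum>i\<in>A. q i)"
        using that Sim_nonneg[OF q] unfolding A_def by (intro member_le_sum) auto
      thus ?thesis using that Sim_nonneg[OF q] sum_A x unfolding A_def by auto
    qed
    have "(1 - x) / (N - 1) \<le> (1 - x) / 1" using x N by (intro divide_left_mono) auto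
    hence "(\<Sum>i\<in>A. OD_term 1 (q i)) \<le> (N - 1) * OD_term 1 ((1 - x) / (N - 1))"
      using OD_term_one_jensen[of A "\<lambda>_. 1" q "(1 - x) / (N - 1)"] q_A sum_A card_A x N
      unfolding A_def by simp
    hence "(\<Sum>i<n. OD_term 1 (q i)) \<le> OD_term 1 x + (N - 1) * OD_term 1 ((1 - x) / (N - 1))"
      unfolding A_def x_def by (simp add: sum_lessThan_remove[OF j(1)])
    also have "\<dots> \<le> N * OD_term 1 (1 / N)" using OD_term_one_split_le[OF N] x by simp
    finally show ?thesis unfolding N_def .
  qed
qed

lemma OD_uniform:
  assumes c: "0 < c" and pc: "\<forall>i<n. p i = c" and q: "q \<in> Sim n"
  shows "OD n q p = (\<Sum>i<n. OD_term 1 (q i)) + ln c"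
proof -
  have "OD n q p = (\<Sum>i<n. OD_term 1 (q i) + q i * ln c)"
    unfolding OD_eq_sum_OD_term using pc Sim_nonneg[OF q] by (intro sum.cong refl) (simp add: OD_term_eq[OF c])
  also have "\<dots> = (\<Sum>i<n. OD_term 1 (q i)) + ln c"
    using q unfolding Sim_def by (simp add: sum.distrib sum_distrib_right[symmetric])
  finally show ?thesis .
qed

lemma SUP_OD_uniform:
  assumes n2: "2 \<le> n" and c: "0 < c" and pc: "\<forall>i<n. p i = c"
  shows "(SUP q\<in>Sim n. OD n q p) = OD n (\<lambda>i. 1 / real n) p"
proof (rule SUP_OD_eq_max)
  show u: "(\<lambda>i. 1 / real n) \<in> Sim n" using n2 unfolding Sim_def by simp
  show "\<forall>q\<in>Sim n. OD n q p \<le> OD n (\<lambda>i. 1 / real n) p"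
    using OD_uniform[OF c pc] sum_OD_term_one_le[OF n2] u by simp
qed

lemma OD_uniform_value:
  assumes n2: "2 \<le> n" and c: "0 < c" and pc: "\<forall>i<n. p i = c"
  shows "OD n (\<lambda>i. 1 / real n) p = (real n - 1) * ln (1 - 1 / real n) + ln (real n) + ln c"
proof -
  have "(1 - 1 / real n) * real n = real n - 1" using n2 by (simp add: field_simps)
  hence "real n * OD_term 1 (1 / real n) = (real n - 1) * ln (1 - 1 / real n) + ln (real n)"
    using n2 unfolding OD_term_def by (simp add: ln_div algebra_simps)
  moreover have "(\<lambda>i. 1 / real n) \<in> Sim n" using n2 unfolding Sim_def by simp
  ultimately show ?thesis using OD_uniform[OF c pc] by simp
qed

theorem fact5p8:
  fixes n :: nat and p :: "nat \<Rightarrow> real"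
  assumes n2: "n \<ge> 2" and ppos: "\<forall>i<n. p i > 0"
  shows
   "(\<forall>j<n. (SUP q\<in>Sim n. OD n q p) = ln (p j) \<longleftrightarrow> p j \<ge> (\<Sum>i\<in>{..<n} - {j}. p i))
    \<and> (n \<ge> 3 \<longrightarrow> card {j. dominant n p j} \<le> 1)
    \<and> ((\<not> (\<exists>j. dominant n p j)) \<longrightarrow>
         (\<exists>q\<in>Sim n. (\<forall>i<n. q i > 0) \<and> (\<forall>q'\<in>Sim n. OD n q' p \<le> OD n q p)))
    \<and> (\<forall>c::real. c > 0 \<longrightarrow> (\<forall>i<n. p i = c) \<longrightarrow>
         (SUP q\<in>Sim n. OD n q p) = OD n (\<lambda>i. 1 / real n) p
         \<and> OD n (\<lambda>i. 1 / real n) p = (real n - 1) * ln (1 - 1 / real n) + ln (real n) + ln c)"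
proof (intro conjI allI impI)
  show "(SUP q\<in>Sim n. OD n q p) = ln (p j) \<longleftrightarrow> (\<Sum>i\<in>{..<n} - {j}. p i) \<le> p j" if "j < n" for j
    using SUP_OD_eq_ln_iff[OF n2 ppos that] .
next
  assume "3 \<le> n"
  moreover have "finite {j. dominant n p j}"
    by (rule finite_subset[of _ "{..<n}"]) (auto simp: dominant_def)
  ultimately show "card {j. dominant n p j} \<le> 1"
    using dominant_unique[OF _ ppos] by (auto simp: card_le_Suc0_iff_eq)
next
  show "\<exists>q\<in>Sim n. (\<forall>i<n. 0 < q i) \<and> (\<forall>q'\<in>Sim n. OD n q' p \<le> OD n q p)"
    if "\<not> (\<exists>j. dominant n p j)"
    using OD_max_in_interior[OF n2 ppos that] .
qed (use SUP_OD_uniform[OF n2] OD_uniform_value[OF n2] in auto)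

end
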